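(* Assume the setting of the context and fix $\Delta=(h,\Delta x)$. If $\mathbf{U}=(U_{\cdot,1},U_{\cdot,2}),\mathbf{V}=(V_{\cdot,1},V_{\cdot,2})\in B(\mathcal{A}^{\Delta x})^2$ are respectively a bounded subsolution and a bounded supersolution of the scheme, i.e. $$\mathcal{F}^\Delta_j\big(x_i,(U_{i,j},U_{i,\bar\jmath}),U_{\cdot,j}\big)\le0\quad\text{and}\quad\mathcal{F}^\Delta_j\big(x_i,(V_{i,j},V_{i,\bar\jmath}),V_{\cdot,j}\big)\ge0\qquad\forall i\in\mathbb{N},\ j=1,2,$$ then $U_{i,j}\le V_{i,j}$ for all $i\in\mathbb{N}$ and $j=1,2$.
   Context: Constants: $\rho>0$, $r<\rho$, $0<y_1<y_2$, $\gamma>1$, $\underline{x}\le0$ with $\rho\underline{x}+y_j>0$, $\lambda_1,\lambda_2\ge0$; $\bar\jmath=3-j$; $u(c)=\frac{c^{1-\gamma}}{1-\gamma}$ for $c>0$, $u(0)=-\infty$. Discretization $\Delta=(h,\Delta x)$ with $h,\Delta x>0$, $\rho h<1$, $\lambda_jh<1$. Grid $x_i=\underline{x}+i\Delta x$, $i\in\mathbb{N}=\{0,1,\dots\}$, $\mathcal{A}^{\Delta x}=\{x_i\}$; $B(\mathcal{A}^{\Delta x})$ = bounded real sequences indexed by $\mathbb{N}$. $\beta_k(x)=\max\{0,1-|x-x_k|/\Delta x\}$ for $x\ge\underline{x}$. Admissible controls $\mathcal{C}^\Delta_j(x_i)=\{c\ge0:x_i+h(rx_i+y_j-c)\ge\underline{x}\}$,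 $s_{i,j}(c)=rx_i+y_j-c$. Scheme: $$\mathcal{F}^\Delta_j(x_i,(\mathsf{q}_j,\mathsf{q}_{\bar\jmath}),\mathsf{U})=\rho\mathsf{q}_j-(1-\rho h)\lambda_j(\mathsf{q}_{\bar\jmath}-\mathsf{q}_j)-\sup_{c\in\mathcal{C}^\Delta_j(x_i)}\Big\{u(c)+\frac{(1-\rho h)(1-\lambda_jh)}{h}\Big(\sum_k\beta_k(x_i+hs_{i,j}(c))\mathsf{U}_k-\mathsf{q}_j\Big)\Big\}.$$ *)

theory Defs
  imports "HOL-Analysis.Analysis" "HOL-Library.Extended_Real"
begin

definition util :: "real \<Rightarrow> real \<Rightarrow> ereal" where
  "util \<gamma> c = (if c > 0 then ereal (c powr (1 - \<gamma>) / (1 - \<gamma>)) else -\<infinity>)"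

definition grid :: "real \<Rightarrow> real \<Rightarrow> nat \<Rightarrow> real" where
  "grid xlow dx i = xlow + real i * dx"

definition hatb :: "real \<Rightarrow> real \<Rightarrow> nat \<Rightarrow> real \<Rightarrow> real" where
  "hatb xlow dx k x = max 0 (1 - \<bar>x - grid xlow dx k\<bar> / dx)"

definition interp :: "real \<Rightarrow> real \<Rightarrow> (nat \<Rightarrow> real) \<Rightarrow> real \<Rightarrow> real" where
  "interp xlow dx U x = (\<Sum>k. hatb xlow dx k x * U k)"

definition admissible :: "real \<Rightarrow> real \<Rightarrow> real \<Rightarrow> real \<Rightarrow> real \<Rightarrow> real set" where
  "admissible r xlow h yj x = {c. c \<ge> 0 \<and> x + h * (r * x + yj - c) \<ge> xlow}"

text \<open>The scheme F_j(x_i,(q_j,q_jbar),U), extended-real valued (the supremum may be -infinity).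
  Here y and lam are the functions j \<mapsto> y_j and j \<mapsto> lambda_j, j \<in> {1,2}.\<close>
definition scheme ::
  "real \<Rightarrow> real \<Rightarrow> real \<Rightarrow> real \<Rightarrow> (nat \<Rightarrow> real) \<Rightarrow> (nat \<Rightarrow> real) \<Rightarrow> real \<Rightarrow> real
   \<Rightarrow> nat \<Rightarrow> nat \<Rightarrow> real \<Rightarrow> real \<Rightarrow> (nat \<Rightarrow> real) \<Rightarrow> ereal" where
  "scheme \<rho> r \<gamma> xlow y lam h dx j i qj qjb U =
     (let x = grid xlow dx i in
      ereal (\<rho> * qj - (1 - \<rho> * h) * lam j * (qjb - qj))
      - (SUP c \<in> admissible r xlow h (y j) x.
           util \<gamma> c + ereal ((1 - \<rho> * h) * (1 - lam j * h) / h
              * (interp xlow dx U (x + h * (r * x + y j - c)) - qj))))"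

end

theory Submission imports Defs begin

text \<open>The scheme is monotone: the interpolation at a point right of \<open>xlow\<close> is a convex
  combination of two grid values, and \<open>\<rho> h < 1\<close>, \<open>\<lambda>\<^sub>j h < 1\<close> make all weights nonnegative.
  Hence, comparing the sub- and supersolution inequalities at a node where \<open>U - V = d\<close> gives
  \<open>\<rho> d \<le> C\<^sub>j (M - d)\<close> with \<open>0 \<le> C\<^sub>j \<le> C\<close>, where \<open>M\<close> is the supremum of \<open>U - V\<close> over all nodes.
  So \<open>d \<le> C M / (\<rho> + C)\<close> at every node, hence \<open>M \<le> C M / (\<rho> + C)\<close>, which forces \<open>M \<le> 0\<close>.\<close>

lemma hatb_grid_coordinate:
  assumes "dx > 0"
  shows "hatb xlow dx k z = max 0 (1 - \<bar>(z - xlow) / dx - real k\<bar>)"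
proof -
  have "\<bar>z - grid xlow dx k\<bar> / dx = \<bar>(z - grid xlow dx k) / dx\<bar>"
    using assms by simp
  also have "(z - grid xlow dx k) / dx = (z - xlow) / dx - real k"
    using assms by (simp add: grid_def field_simps)
  finally show ?thesis
    unfolding hatb_def by simp
qed

lemma interp_two_point:
  assumes "dx > 0" "z \<ge> xlow"
  obtains n f where "0 \<le> f" "f \<le> 1"
    "\<And>U. interp xlow dx U z = (1 - f) * U n + f * U (Suc n)"
proof -
  define t where "t = (z - xlow) / dx"
  have "t \<ge> 0"
    using assms by (simp add: t_def)
  define n where "n = nat \<lfloor>t\<rfloor>"
  define f where "f = t - real n"
  have f: "0 \<le> f" "f < 1"
    using \<open>t \<ge> 0\<close> by (auto simp: f_def n_def) linarith+
  have hat: "hatb xlow dx k z = max 0 (1 - \<bar>t - real k\<bar>)" for k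
    using hatb_grid_coordinate[OF assms(1)] by (simp add: t_def)
  have outside: "hatb xlow dx k z = 0" if "k \<notin> {n, Suc n}" for k
  proof -
    have "k < n \<or> k > Suc n"
      using that by auto
    then have "\<bar>t - real k\<bar> \<ge> 1"
      using f unfolding f_def by auto
    then show ?thesis
      using hat by simp
  qed
  have "interp xlow dx U z = (1 - f) * U n + f * U (Suc n)" for U
  proof -
    have "interp xlow dx U z = (\<Sum>k\<in>{n, Suc n}. hatb xlow dx k z * U k)"
      unfolding interp_def by (rule suminf_finite) (auto simp: outside)
    then show ?thesis
      using hat f by (simp add: f_def)
  qed
  with f that show ?thesis
    by auto
qed

lemma interp_diff_le:
  assumes "dx > 0" "z \<ge> xlow" "\<And>k. U k - V k \<le> M"
  shows "interp xlow dx U z - interp xlow dx V z \<le> M"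
proof -
  obtain f n where f: "0 \<le> f" "f \<le> 1"
    and two_point: "\<And>W. interp xlow dx W z = (1 - f) * W n + f * W (Suc n)"
    using interp_two_point[OF assms(1,2)] by metis
  have "interp xlow dx U z - interp xlow dx V z
        = (1 - f) * (U n - V n) + f * (U (Suc n) - V (Suc n))"
    unfolding two_point by (simp add: algebra_simps)
  also have "\<dots> \<le> (1 - f) * M + f * M"
    using f assms(3) by (intro add_mono mult_left_mono) simp_all
  also have "\<dots> = M"
    by (simp add: algebra_simps)
  finally show ?thesis .
qed

definition control_sup ::
  "real \<Rightarrow> real \<Rightarrow> real \<Rightarrow> real \<Rightarrow> real \<Rightarrow> real \<Rightarrow> real \<Rightarrow> real \<Rightarrow> real \<Rightarrow> (nat \<Rightarrow> real) \<Rightarrow> ereal"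
  where "control_sup r \<gamma> xlow dx yj h K x q U =
    (SUP c \<in> admissible r xlow h yj x.
       util \<gamma> c + ereal (K * (interp xlow dx U (x + h * (r * x + yj - c)) - q)))"

lemma scheme_eq_control_sup:
  "scheme \<rho> r \<gamma> xlow y lam h dx j i qj qjb U =
     ereal (\<rho> * qj - (1 - \<rho> * h) * lam j * (qjb - qj))
     - control_sup r \<gamma> xlow dx (y j) h ((1 - \<rho> * h) * (1 - lam j * h) / h) (grid xlow dx i) qj U"
  unfolding scheme_def control_sup_def Let_def ..

lemma control_sup_le:
  assumes "dx > 0" "K \<ge> 0" "\<And>k. U k - V k \<le> M"
  shows "control_sup r \<gamma> xlow dx yj h K x qU U
         \<le> control_sup r \<gamma> xlow dx yj h K x qV V + ereal (K * (M - (qU - qV)))"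
proof -
  define z where "z c = x + h * (r * x + yj - c)" for c
  define gU where "gU c = util \<gamma> c + ereal (K * (interp xlow dx U (z c) - qU))" for c
  define gV where "gV c = util \<gamma> c + ereal (K * (interp xlow dx V (z c) - qV))" for c
  define e where "e = K * (M - (qU - qV))"
  have "gU c \<le> gV c + ereal e" if "c \<in> admissible r xlow h yj x" for c
  proof -
    have "z c \<ge> xlow"
      using that unfolding admissible_def z_def by simp
    then have "K * (interp xlow dx U (z c) - interp xlow dx V (z c)) \<le> K * M"
      using assms by (intro mult_left_mono interp_diff_le) auto
    then have "K * (interp xlow dx U (z c) - qU) \<le> K * (interp xlow dx V (z c) - qV) + e"
      by (simp add: e_def algebra_simps)
    then show ?thesis
      unfolding gU_def gV_def by (simp only: add.assoc plus_ereal.simps ereal_less_eq(3) add_left_mono)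
  qed
  then have "(SUP c \<in> admissible r xlow h yj x. gU c) \<le> (SUP c \<in> admissible r xlow h yj x. gV c) + ereal e"
    by (intro SUP_least order_trans[OF _ add_right_mono[OF SUP_upper]])
  then show ?thesis
    unfolding control_sup_def gU_def gV_def z_def e_def .
qed

lemma scheme_node_comparison:
  assumes "h > 0" "dx > 0" "\<rho> * h < 1" "lam j \<ge> 0" "lam j * h < 1"
    and sub: "scheme \<rho> r \<gamma> xlow y lam h dx j i qU qUb U \<le> 0"
    and super: "scheme \<rho> r \<gamma> xlow y lam h dx j i qV qVb V \<ge> 0"
    and "\<And>k. U k - V k \<le> M" "qUb - qVb \<le> M"
  shows "\<rho> * (qU - qV)
         \<le> ((1 - \<rho> * h) * lam j + (1 - \<rho> * h) * (1 - lam j * h) / h) * (M - (qU - qV))"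
proof -
  define K where "K = (1 - \<rho> * h) * (1 - lam j * h) / h"
  define L where "L = (1 - \<rho> * h) * lam j"
  define SU where "SU = control_sup r \<gamma> xlow dx (y j) h K (grid xlow dx i) qU U"
  define SV where "SV = control_sup r \<gamma> xlow dx (y j) h K (grid xlow dx i) qV V"
  have "K \<ge> 0" "L \<ge> 0"
    using assms(1-5) by (auto simp: K_def L_def)
  have "ereal (\<rho> * qU - L * (qUb - qU)) - SU \<le> 0"
    using sub unfolding scheme_eq_control_sup SU_def K_def L_def .
  then have "ereal (\<rho> * qU - L * (qUb - qU)) \<le> SU"
    by (cases SU) auto
  also have "SU \<le> SV + ereal (K * (M - (qU - qV)))"
    unfolding SU_def SV_def using assms(2) \<open>K \<ge> 0\<close> assms(8) by (rule control_sup_le)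
  also have "SV + ereal (K * (M - (qU - qV)))
             \<le> ereal (\<rho> * qV - L * (qVb - qV)) + ereal (K * (M - (qU - qV)))"
  proof -
    have "ereal (\<rho> * qV - L * (qVb - qV)) - SV \<ge> 0"
      using super unfolding scheme_eq_control_sup SV_def K_def L_def .
    then show ?thesis
      by (cases SV) auto
  qed
  finally have "\<rho> * (qU - qV) \<le> L * ((qUb - qVb) - (qU - qV)) + K * (M - (qU - qV))"
    by (simp add: algebra_simps)
  also have "\<dots> \<le> L * (M - (qU - qV)) + K * (M - (qU - qV))"
    using \<open>L \<ge> 0\<close> assms(9) by (intro add_right_mono mult_left_mono) auto
  finally show ?thesis
    by (simp add: K_def L_def algebra_simps)
qed

lemma nonpos_of_discounted_bound:
  fixes D C :: "'a \<Rightarrow> real"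
  assumes "bdd_above (D ` A)" "\<rho> > 0"
    and "\<And>a. a \<in> A \<Longrightarrow> 0 \<le> C a \<and> C a \<le> Cmax"
    and "\<And>a M. a \<in> A \<Longrightarrow> (\<And>b. b \<in> A \<Longrightarrow> D b \<le> M) \<Longrightarrow> \<rho> * D a \<le> C a * (M - D a)"
    and "a \<in> A"
  shows "D a \<le> 0"
proof -
  define M where "M = (SUP b\<in>A. D b)"
  have D_le_M: "D b \<le> M" if "b \<in> A" for b
    unfolding M_def using assms(1) that by (rule cSUP_upper2) simp
  have "Cmax \<ge> 0"
    using assms(3)[OF assms(5)] by simp
  have bound: "D b \<le> Cmax * M / (\<rho> + Cmax)" if "b \<in> A" for b
  proof -
    have "C b * (M - D b) \<le> Cmax * (M - D b)"
      using assms(3)[OF that] D_le_M[OF that] by (intro mult_right_mono) auto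
    then have "(\<rho> + Cmax) * D b \<le> Cmax * M"
      using assms(4)[OF that D_le_M] by (simp add: algebra_simps)
    then show ?thesis
      using assms(2) \<open>Cmax \<ge> 0\<close> by (simp add: field_simps)
  qed
  have "M \<le> Cmax * M / (\<rho> + Cmax)"
    using assms(5) bound unfolding M_def by (intro cSUP_least) auto
  then have "\<rho> * M \<le> 0"
    using assms(2) \<open>Cmax \<ge> 0\<close> by (simp add: field_simps)
  then have "M \<le> 0"
    using assms(2) by (simp add: mult_le_0_iff)
  then show ?thesis
    using D_le_M[OF assms(5)] by simp
qed

theorem mainTheorem11:
  fixes \<rho> r \<gamma> xlow h dx :: real
    and y lam :: "nat \<Rightarrow> real"
    and U V :: "nat \<Rightarrow> nat \<Rightarrow> real"
  assumes "\<rho> > 0" and "r < \<rho>"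
    and "0 < y 1" and "y 1 < y 2"
    and "\<gamma> > 1" and "xlow \<le> 0"
    and "\<And>j. j \<in> {1,2} \<Longrightarrow> \<rho> * xlow + y j > 0"
    and "\<And>j. j \<in> {1,2} \<Longrightarrow> lam j \<ge> 0"
    and "h > 0" and "dx > 0" and "\<rho> * h < 1"
    and "\<And>j. j \<in> {1,2} \<Longrightarrow> lam j * h < 1"
    and "\<exists>M. \<forall>i. \<forall>j\<in>{1,2}. \<bar>U i j\<bar> \<le> M"
    and "\<exists>M. \<forall>i. \<forall>j\<in>{1,2}. \<bar>V i j\<bar> \<le> M"
    and "\<And>i j. j \<in> {1,2} \<Longrightarrow>
           scheme \<rho> r \<gamma> xlow y lam h dx j i (U i j) (U i (3 - j)) (\<lambda>k. U k j) \<le> 0"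
    and "\<And>i j. j \<in> {1,2} \<Longrightarrow>
           scheme \<rho> r \<gamma> xlow y lam h dx j i (V i j) (V i (3 - j)) (\<lambda>k. V k j) \<ge> 0"
  shows "\<forall>i. \<forall>j\<in>{1,2}. U i j \<le> V i j"
proof -
  define A where "A = (UNIV :: nat set) \<times> {1, 2 :: nat}"
  define D where "D = (\<lambda>(i, j). U i j - V i j)"
  define C where "C j = (1 - \<rho> * h) * lam j + (1 - \<rho> * h) * (1 - lam j * h) / h" for j
  have C_nonneg: "0 \<le> C j" if "j \<in> {1, 2}" for j
    using assms(8)[OF that] assms(9,11) assms(12)[OF that] by (simp add: C_def)
  obtain MU MV where bounds: "\<forall>i. \<forall>j\<in>{1,2}. \<bar>U i j\<bar> \<le> MU" "\<forall>i. \<forall>j\<in>{1,2}. \<bar>V i j\<bar> \<le> MV"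
    using assms(13,14) by blast
  have bdd: "bdd_above (D ` A)"
    unfolding A_def D_def
  proof (intro bdd_aboveI2[of _ _ "MU + MV"], clarify)
    fix i j :: nat
    assume "j \<in> {1, 2}"
    with bounds have "\<bar>U i j\<bar> \<le> MU" "\<bar>V i j\<bar> \<le> MV"
      by blast+
    then show "U i j - V i j \<le> MU + MV"
      by linarith
  qed
  have node: "\<rho> * D a \<le> C (snd a) * (M - D a)"
    if "a \<in> A" and upper: "\<And>b. b \<in> A \<Longrightarrow> D b \<le> M" for a M
  proof -
    obtain i j where a: "a = (i, j)" and j: "j \<in> {1, 2}"
      using \<open>a \<in> A\<close> by (auto simp: A_def)
    have upper_UV: "U k l - V k l \<le> M" if "l \<in> {1, 2}" for k l
      using upper[of "(k, l)"] that by (simp add: A_def D_def)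
    have "3 - j \<in> {1, 2}"
      using j by auto
    then have "\<rho> * (U i j - V i j) \<le> C j * (M - (U i j - V i j))"
      unfolding C_def
      by (rule scheme_node_comparison[OF assms(9-11) assms(8,12)[OF j] assms(15,16)[OF j]
            upper_UV[OF j] upper_UV])
    then show ?thesis
      by (simp add: a D_def)
  qed
  have "D a \<le> 0" if "a \<in> A" for a
  proof (rule nonpos_of_discounted_bound[OF bdd assms(1) _ node that])
    show "0 \<le> C (snd b) \<and> C (snd b) \<le> C 1 + C 2" if "b \<in> A" for b
      using that C_nonneg[of 1] C_nonneg[of 2] by (auto simp: A_def)
  qed
  then show ?thesis
    by (auto simp: A_def D_def)
qed

end
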